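(* Let $n\ge 1$ be an integer and let $a_i(x)$, $0\le i\le n-1$, be real continuous functions on an open interval $I=(a,b)$. Then there exists a solution $y$ on $I$ of the linear ordinary differential equation $$y^{(n)}+a_{n-1}(x)\,y^{(n-1)}+\cdots+a_0(x)\,y=0$$ such that $y, y', \ldots, y^{(n-1)}$ are linearly independent over $I$.
   Context: Linear independence over $I$ means that no nontrivial real linear combination of the functions vanishes identically on $I$. *)

theory Defs
  imports "HOL-Analysis.Analysis"
begin

definition higher_deriv :: "nat \<Rightarrow> (real \<Rightarrow> real) \<Rightarrow> real \<Rightarrow> real" where
  "higher_deriv k f = (deriv ^^ k) f"

definition n_times_differentiable_on :: "nat \<Rightarrow> (real \<Rightarrow> real) \<Rightarrow> real set \<Rightarrow> bool" where
  "n_times_differentiable_on n y I \<longleftrightarrow>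
     (\<forall>k<n. \<forall>x\<in>I. (higher_deriv k y has_real_derivative higher_deriv (Suc k) y x) (at x))"

definition is_linear_ode_solution ::
  "nat \<Rightarrow> (nat \<Rightarrow> real \<Rightarrow> real) \<Rightarrow> real set \<Rightarrow> (real \<Rightarrow> real) \<Rightarrow> bool" where
  "is_linear_ode_solution n a I y \<longleftrightarrow>
     n_times_differentiable_on n y I \<and>
     (\<forall>x\<in>I. higher_deriv n y x + (\<Sum>i<n. a i x * higher_deriv i y x) = 0)"

definition lin_indep_on :: "nat \<Rightarrow> (nat \<Rightarrow> real \<Rightarrow> real) \<Rightarrow> real set \<Rightarrow> bool" where
  "lin_indep_on m f I \<longleftrightarrow>
     (\<forall>c::nat \<Rightarrow> real. (\<forall>x\<in>I. (\<Sum>i<m. c i * f i x) = 0) \<longrightarrow> (\<forall>i<m. c i = 0))"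

end

theory Submission
  imports Defs "HOL-Computational_Algebra.Polynomial_Factorial" "HOL-Computational_Algebra.Field_as_Ring"
begin

text \<open>
  Suppose no solution has linearly independent derivatives \<open>y, \<dots>, y\<^sup>(\<^sup>n\<^sup>-\<^sup>1\<^sup>)\<close>. Then every
  solution satisfies a relation \<open>y\<^sup>(\<^sup>m\<^sup>) = \<Sum>\<^sub>i\<^sub><\<^sub>m e\<^sub>i y\<^sup>(\<^sup>i\<^sup>)\<close> on \<open>I\<close> with \<open>m < n\<close>;
  differentiating it shows that \<open>y\<close> is smooth and that its jet \<open>k \<mapsto> y\<^sup>(\<^sup>k\<^sup>)(x\<^sub>0)\<close> is
  annihilated by a nonzero polynomial of degree \<open>< n\<close> in the shift operator.
  Let \<open>Y\<^sub>0, \<dots>, Y\<^sub>n\<^sub>-\<^sub>1\<close> be the solutions (obtained by Picard iteration) whose initial jets are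
  the unit vectors, and let \<open>P\<close> be the product of annihilators of their jets. Then \<open>P\<close>
  annihilates the jet of every combination \<open>\<Sum>\<^sub>j v\<^sub>j Y\<^sub>j\<close>; if such a jet also has an
  annihilator \<open>q\<close> of degree \<open>< n\<close>, then so does it have the normalized divisor \<open>gcd P q\<close>
  of \<open>P\<close>.
  For each of the finitely many such divisors \<open>g\<close>, the coefficient vectors \<open>v\<close> whose jet
  is annihilated by \<open>g\<close> form a proper linear subspace (the unit vector \<open>e\<^bsub>deg g\<^esub>\<close> is not
  in it), and finitely many proper subspaces cannot cover all \<open>v\<close>: a \<open>v\<close> outside all of
  them yields a solution with independent derivatives.
\<close>

section \<open>Polynomials in the shift operator\<close>

text \<open>\<open>poly_shift p s\<close> is \<open>p(E) s\<close> for the shift operator \<open>(E s) k = s (k + 1)\<close>.\<close>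

definition poly_shift :: "'a::comm_semiring_1 poly \<Rightarrow> (nat \<Rightarrow> 'a) \<Rightarrow> nat \<Rightarrow> 'a" where
  "poly_shift p s k = (\<Sum>i\<le>degree p. coeff p i * s (k + i))"

definition annihilates :: "'a::comm_semiring_1 poly \<Rightarrow> (nat \<Rightarrow> 'a) \<Rightarrow> bool" where
  "annihilates p s \<longleftrightarrow> (\<forall>k. poly_shift p s k = 0)"

lemma poly_shift_eq_sum_lessThan:
  assumes "degree p < N"
  shows "poly_shift p s k = (\<Sum>i<N. coeff p i * s (k + i))"
  unfolding poly_shift_def
  by (rule sum.mono_neutral_left) (use assms in \<open>auto simp: coeff_eq_0\<close>)

lemma poly_shift_0 [simp]: "poly_shift 0 s k = 0"
  by (simp add: poly_shift_def)

lemma poly_shift_pCons: "poly_shift (pCons a p) s k = a * s k + poly_shift p s (Suc k)"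
proof -
  have "poly_shift (pCons a p) s k = (\<Sum>i<Suc (Suc (degree p)). coeff (pCons a p) i * s (k + i))"
    by (rule poly_shift_eq_sum_lessThan) (use degree_pCons_le[of a p] in linarith)
  also have "\<dots> = a * s k + (\<Sum>i<Suc (degree p). coeff p i * s (Suc k + i))"
    by (subst sum.lessThan_Suc_shift) simp
  also have "\<dots> = a * s k + poly_shift p s (Suc k)"
    using poly_shift_eq_sum_lessThan[of p "Suc (degree p)" s "Suc k"] by simp
  finally show ?thesis .
qed

lemma poly_shift_add: "poly_shift (p + q) s k = poly_shift p s k + poly_shift q s k"
proof -
  define N where "N = Suc (max (degree p) (degree q))"
  have "degree (p + q) < N" "degree p < N" "degree q < N"
    using degree_add_le_max[of p q] by (auto simp: N_def)
  then show ?thesis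
    by (simp add: poly_shift_eq_sum_lessThan sum.distrib distrib_right)
qed

lemma poly_shift_smult: "poly_shift (smult c p) s k = c * poly_shift p s k"
proof -
  have "poly_shift (smult c p) s k = (\<Sum>i<Suc (degree p). coeff (smult c p) i * s (k + i))"
    by (rule poly_shift_eq_sum_lessThan) (use degree_smult_le[of c p] in linarith)
  also have "\<dots> = c * (\<Sum>i<Suc (degree p). coeff p i * s (k + i))"
    by (simp only: coeff_smult sum_distrib_left mult.assoc)
  finally show ?thesis
    by (simp only: poly_shift_eq_sum_lessThan[of p "Suc (degree p)", symmetric] lessI)
qed

lemma poly_shift_mult: "poly_shift (p * q) s k = poly_shift p (poly_shift q s) k"
proof (induction p arbitrary: k)
  case (pCons a p)
  have "pCons a p * q = smult a q + pCons 0 (p * q)"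
    by simp
  then show ?case
    by (simp add: poly_shift_add poly_shift_smult poly_shift_pCons pCons.IH)
qed simp

lemma poly_shift_sum:
  "poly_shift p (\<lambda>k. \<Sum>j\<in>J. v j * s j k) k = (\<Sum>j\<in>J. v j * poly_shift p (s j) k)"
  unfolding poly_shift_def
  by (simp add: sum_distrib_left sum.swap[of _ J] algebra_simps)

lemma annihilates_mult_left:
  assumes "annihilates q s"
  shows "annihilates (r * q) s"
proof -
  have "poly_shift q s = (\<lambda>_. 0)"
    using assms by (auto simp: annihilates_def)
  then show ?thesis
    unfolding annihilates_def poly_shift_mult by (simp add: poly_shift_def)
qed

lemma annihilates_gcd:
  fixes p q :: "'a::field_gcd poly"
  assumes "annihilates p s" "annihilates q s"
  shows "annihilates (gcd p q) s"
proof -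
  obtain u w where "gcd p q = u * p + w * q"
    using bezout_coefficients_fst_snd by metis
  moreover have "annihilates (u * p) s" "annihilates (w * q) s"
    using assms by (auto intro: annihilates_mult_left)
  ultimately show ?thesis
    by (simp add: annihilates_def poly_shift_add)
qed

lemma annihilates_sum:
  "(\<And>j. j \<in> J \<Longrightarrow> annihilates p (s j)) \<Longrightarrow> annihilates p (\<lambda>k. \<Sum>j\<in>J. v j * s j k)"
  by (simp add: annihilates_def poly_shift_sum)

lemma finite_normalized_divisors:
  fixes x :: "'a::factorial_semiring"
  assumes "x \<noteq> 0"
  shows "finite {y. y dvd x \<and> normalize y = y}"
proof (rule finite_subset)
  let ?N = "prime_factorization x"
  show "{y. y dvd x \<and> normalize y = y} \<subseteq>
      (\<lambda>M. normalize (prod_mset M)) ` (\<Union>k\<le>size ?N. multisets_of_size (set_mset ?N) k)"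
  proof
    fix y assume y: "y \<in> {y. y dvd x \<and> normalize y = y}"
    then have "y \<noteq> 0" using assms by auto
    then have eq: "y = normalize (prod_mset (prime_factorization y))"
      using y by (simp add: prod_mset_prime_factorization_weak)
    have sub: "prime_factorization y \<subseteq># ?N"
      using y \<open>y \<noteq> 0\<close> assms prime_factorization_subset_iff_dvd by blast
    then have "prime_factorization y \<in> multisets_of_size (set_mset ?N) (size (prime_factorization y))"
      using sub by (auto simp: multisets_of_size_def dest: mset_subset_eqD)
    moreover have "size (prime_factorization y) \<le> size ?N"
      using sub by (rule size_mset_mono)
    ultimately show "y \<in> (\<lambda>M. normalize (prod_mset M)) ` (\<Union>k\<le>size ?N. multisets_of_size (set_mset ?N) k)"
      using eq by blast
  qed
qed auto

definition lincomb_closed :: "('b \<Rightarrow> 'a::field) set \<Rightarrow> bool" where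
  "lincomb_closed S \<longleftrightarrow> (\<forall>u\<in>S. \<forall>w\<in>S. \<forall>\<alpha> \<beta>. (\<lambda>i. \<alpha> * u i + \<beta> * w i) \<in> S)"

lemma lincomb_closed_line:
  assumes "lincomb_closed T" "(\<lambda>i. w i + s * u i) \<in> T" "(\<lambda>i. w i + t * u i) \<in> T" "s \<noteq> t"
  shows "w \<in> T" and "u \<in> T"
proof -
  have "t - s \<noteq> 0"
    using \<open>s \<noteq> t\<close> by simp
  have closed: "\<And>\<alpha> \<beta>. (\<lambda>i. \<alpha> * (w i + s * u i) + \<beta> * (w i + t * u i)) \<in> T"
    by (rule assms(1)[unfolded lincomb_closed_def, rule_format, OF assms(2,3)])
  have "(\<lambda>i. (t / (t - s)) * (w i + s * u i) + (- s / (t - s)) * (w i + t * u i)) \<in> T"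
    by (rule closed)
  moreover have "(t / (t - s)) * (w i + s * u i) + (- s / (t - s)) * (w i + t * u i) = w i" for i
    using \<open>t - s \<noteq> 0\<close> by (simp add: divide_simps) (simp add: algebra_simps)
  ultimately show "w \<in> T"
    by simp
  have "(\<lambda>i. (- 1 / (t - s)) * (w i + s * u i) + (1 / (t - s)) * (w i + t * u i)) \<in> T"
    by (rule closed)
  moreover have "(- 1 / (t - s)) * (w i + s * u i) + (1 / (t - s)) * (w i + t * u i) = u i" for i
    using \<open>t - s \<noteq> 0\<close> by (simp add: divide_simps) (simp add: algebra_simps)
  ultimately show "u \<in> T"
    by simp
qed

lemma ex_not_in_finite_union_of_lincomb_closed:
  fixes F :: "('b \<Rightarrow> 'a::field_char_0) set set"
  assumes "finite F" "\<And>S. S \<in> F \<Longrightarrow> lincomb_closed S" "\<And>S. S \<in> F \<Longrightarrow> S \<noteq> UNIV"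
  shows "\<exists>v. \<forall>S\<in>F. v \<notin> S"
  using assms
proof (induction F rule: finite_induct)
  case (insert S F)
  have "lincomb_closed S"
    using insert.prems(1) by simp
  have "\<exists>w. \<forall>T\<in>F. w \<notin> T"
    using insert.prems by (intro insert.IH) simp_all
  then obtain w where w: "\<forall>T\<in>F. w \<notin> T"
    by blast
  show ?case
  proof (cases "w \<in> S")
    case True
    obtain u where "u \<notin> S"
      using insert.prems(2) by blast
    define z where "z t = (\<lambda>i. w i + t * u i)" for t :: 'a
    \<comment> \<open>The line through \<open>w\<close> in direction \<open>u\<close> meets each member of \<open>F\<close> at most once
      and meets \<open>S\<close> only at \<open>w\<close>.\<close>
    have "finite {t. z t \<in> T}" if "T \<in> F" for T
    proof (cases "{t. z t \<in> T} = {}")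
      case False
      then obtain t0 where t0: "z t0 \<in> T"
        by blast
      have "{t. z t \<in> T} \<subseteq> {t0}"
      proof
        fix t assume "t \<in> {t. z t \<in> T}"
        then have "z t \<in> T"
          by simp
        then show "t \<in> {t0}"
          using lincomb_closed_line(1)[OF insert.prems(1)[OF insertI2[OF that]] _ t0[unfolded z_def]] w that
          by (auto simp: z_def)
      qed
      then show ?thesis
        by (rule finite_subset) simp
    qed simp
    then have fin: "finite ({0} \<union> (\<Union>T\<in>F. {t. z t \<in> T}))"
      using insert.hyps(1) by simp
    obtain t where t: "t \<notin> {0} \<union> (\<Union>T\<in>F. {t. z t \<in> T})"
      using ex_new_if_finite[OF infinite_UNIV_char_0 fin] by blast
    have "z t \<notin> S"
    proof
      assume "z t \<in> S"
      moreover have "z 0 \<in> S"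
        using True by (simp add: z_def)
      ultimately have "u \<in> S"
        using lincomb_closed_line(2)[OF \<open>lincomb_closed S\<close>, of w 0 u t] t by (simp add: z_def)
      then show False
        using \<open>u \<notin> S\<close> by simp
    qed
    with t show ?thesis
      by (intro exI[of _ "z t"]) simp
  qed (use w in blast)
qed simp

lemma annihilates_prod:
  fixes q :: "nat \<Rightarrow> 'a::idom poly"
  assumes "\<And>j. j \<in> J \<Longrightarrow> annihilates (q j) (s j)" "finite J"
    and "j \<in> J"
  shows "annihilates (\<Prod>i\<in>J. q i) (s j)"
proof -
  have "(\<Prod>i\<in>J. q i) = (\<Prod>i\<in>J - {j}. q i) * q j"
    using assms(2,3) by (simp add: prod.remove mult.commute)
  then show ?thesis
    using annihilates_mult_left[OF assms(1)[OF \<open>j \<in> J\<close>]] by metis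
qed

lemma not_annihilates_delta:
  assumes "g \<noteq> 0" "\<And>k. k \<le> degree g \<Longrightarrow> s k = (if k = degree g then 1 else 0)"
  shows "\<not> annihilates g s"
proof -
  have "poly_shift g s 0 = (\<Sum>i\<le>degree g. if i = degree g then coeff g i else 0)"
    unfolding poly_shift_def by (intro sum.cong) (use assms(2) in auto)
  also have "\<dots> = lead_coeff g"
    by simp
  finally have "poly_shift g s 0 \<noteq> 0"
    using \<open>g \<noteq> 0\<close> by simp
  then show ?thesis
    unfolding annihilates_def by blast
qed

lemma ex_lincomb_without_short_annihilator:
  fixes s :: "nat \<Rightarrow> nat \<Rightarrow> 'a::{field_char_0,field_gcd}"
  assumes annih: "\<And>j. j < n \<Longrightarrow> \<exists>q. q \<noteq> 0 \<and> annihilates q (s j)"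
    and unit: "\<And>j k. j < n \<Longrightarrow> k < n \<Longrightarrow> s j k = (if k = j then 1 else 0)"
  shows "\<exists>v. \<forall>q. q \<noteq> 0 \<longrightarrow> degree q < n \<longrightarrow> \<not> annihilates q (\<lambda>k. \<Sum>j<n. v j * s j k)"
proof -
  define comb where "comb v k = (\<Sum>j<n. v j * s j k)" for v k
  obtain qq where qq: "\<And>j. j < n \<Longrightarrow> qq j \<noteq> 0 \<and> annihilates (qq j) (s j)"
    using annih by metis
  define P where "P = (\<Prod>j<n. qq j)"
  have "P \<noteq> 0"
    using qq by (simp add: P_def)
  have P_annih: "annihilates P (comb v)" for v
    unfolding comb_def P_def using qq by (intro annihilates_sum annihilates_prod) auto
  \<comment> \<open>Any short annihilator of a combination can be replaced by its gcd with \<open>P\<close>: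
    only the finitely many normalized divisors of \<open>P\<close> have to be avoided.\<close>
  define Q where "Q = {g. g dvd P \<and> normalize g = g \<and> degree g < n}"
  define F where "F = (\<lambda>g. {v. annihilates g (comb v)}) ` Q"
  have "\<exists>v. \<forall>S\<in>F. v \<notin> S"
  proof (rule ex_not_in_finite_union_of_lincomb_closed)
    show "finite F"
      unfolding F_def Q_def
      by (intro finite_imageI finite_subset[OF _ finite_normalized_divisors[OF \<open>P \<noteq> 0\<close>]]) auto
  next
    fix S assume "S \<in> F"
    then obtain g where g: "g \<in> Q" and S: "S = {v. annihilates g (comb v)}"
      by (auto simp: F_def)
    have "poly_shift g (comb v) k = (\<Sum>j<n. v j * poly_shift g (s j) k)" for v k
      unfolding comb_def by (rule poly_shift_sum)
    then have "poly_shift g (comb (\<lambda>i. \<alpha> * u i + \<beta> * w i)) k =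
        \<alpha> * poly_shift g (comb u) k + \<beta> * poly_shift g (comb w) k" for \<alpha> \<beta> u w k
      by (simp add: sum.distrib sum_distrib_left algebra_simps)
    then show "lincomb_closed S"
      by (simp add: S lincomb_closed_def annihilates_def)
    have "degree g < n" "g \<noteq> 0"
      using g \<open>P \<noteq> 0\<close> by (auto simp: Q_def)
    define e where "e j = (if j = degree g then 1 else 0 :: 'a)" for j
    have "comb e = s (degree g)"
      using \<open>degree g < n\<close>
      by (simp add: fun_eq_iff comb_def e_def if_distrib[of "\<lambda>x. x * _"] sum.delta cong: if_cong)
    then have "e \<notin> S"
      using not_annihilates_delta[OF \<open>g \<noteq> 0\<close>, of "s (degree g)"] \<open>degree g < n\<close> unit
      by (simp add: S)
    then show "S \<noteq> UNIV"
      by blast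
  qed
  then obtain v where v: "\<forall>S\<in>F. v \<notin> S"
    by blast
  have "\<not> annihilates q (comb v)" if "q \<noteq> 0" "degree q < n" for q
  proof
    assume "annihilates q (comb v)"
    then have "annihilates (gcd P q) (comb v)"
      using P_annih annihilates_gcd by blast
    moreover have "gcd P q \<in> Q"
      using dvd_imp_degree_le[of "gcd P q" q] that by (auto simp: Q_def)
    ultimately show False
      using v by (auto simp: F_def)
  qed
  then show ?thesis
    unfolding comb_def by blast
qed

section \<open>Higher derivatives and linear relations between them\<close>

lemma higher_deriv_0 [simp]: "higher_deriv 0 f = f"
  by (simp add: higher_deriv_def)

lemma higher_deriv_Suc: "higher_deriv (Suc k) f = deriv (higher_deriv k f)"
  by (simp add: higher_deriv_def)

lemma DERIV_transform_open:
  assumes "(g has_real_derivative D) (at x)" "open I" "x \<in> I" "\<And>z. z \<in> I \<Longrightarrow> f z = g z"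
  shows "(f has_real_derivative D) (at x)" and "deriv f x = D"
proof -
  show *: "(f has_real_derivative D) (at x)"
    using has_field_derivative_transform_within_open[OF assms(1-3)] assms(4) by simp
  show "deriv f x = D"
    using DERIV_imp_deriv[OF *] .
qed

lemma n_times_differentiable_onD:
  "n_times_differentiable_on n y I \<Longrightarrow> k < n \<Longrightarrow> x \<in> I \<Longrightarrow>
    (higher_deriv k y has_real_derivative higher_deriv (Suc k) y x) (at x)"
  by (simp add: n_times_differentiable_on_def)

lemma n_times_differentiable_on_mono:
  "n_times_differentiable_on n y I \<Longrightarrow> m \<le> n \<Longrightarrow> n_times_differentiable_on m y I"
  by (simp add: n_times_differentiable_on_def)

definition infinitely_differentiable_on :: "(real \<Rightarrow> real) \<Rightarrow> real set \<Rightarrow> bool" where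
  "infinitely_differentiable_on y I \<longleftrightarrow> (\<forall>n. n_times_differentiable_on n y I)"

lemma higher_deriv_lincomb:
  assumes "open I" and diff: "\<And>j. j \<in> J \<Longrightarrow> n_times_differentiable_on N (y j) I"
    and "k \<le> N" "x \<in> I"
  shows "higher_deriv k (\<lambda>z. \<Sum>j\<in>J. c j * y j z) x = (\<Sum>j\<in>J. c j * higher_deriv k (y j) x)"
  using assms(3,4)
proof (induction k arbitrary: x)
  case (Suc k)
  have "((\<lambda>z. \<Sum>j\<in>J. c j * higher_deriv k (y j) z) has_real_derivative
      (\<Sum>j\<in>J. c j * higher_deriv (Suc k) (y j) x)) (at x)"
    using Suc.prems by (intro DERIV_sum DERIV_cmult n_times_differentiable_onD[OF diff]) auto
  then show ?case
    using DERIV_transform_open(2)[OF _ \<open>open I\<close> \<open>x \<in> I\<close>] Suc by (simp add: higher_deriv_Suc)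
qed simp

lemma higher_deriv_lincomb_smooth:
  assumes "open I" "\<And>j. j \<in> J \<Longrightarrow> infinitely_differentiable_on (y j) I" "x \<in> I"
  shows "higher_deriv k (\<lambda>z. \<Sum>j\<in>J. c j * y j z) x = (\<Sum>j\<in>J. c j * higher_deriv k (y j) x)"
  using assms by (intro higher_deriv_lincomb[of I J k y]) (auto simp: infinitely_differentiable_on_def)

lemma n_times_differentiable_on_lincomb:
  assumes "open I" and diff: "\<And>j. j \<in> J \<Longrightarrow> n_times_differentiable_on N (y j) I"
  shows "n_times_differentiable_on N (\<lambda>z. \<Sum>j\<in>J. c j * y j z) I"
  unfolding n_times_differentiable_on_def
proof (intro allI impI ballI)
  fix k x assume "k < N" "x \<in> I"
  have "((\<lambda>z. \<Sum>j\<in>J. c j * higher_deriv k (y j) z) has_real_derivative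
      (\<Sum>j\<in>J. c j * higher_deriv (Suc k) (y j) x)) (at x)"
    using \<open>k < N\<close> \<open>x \<in> I\<close> by (intro DERIV_sum DERIV_cmult n_times_differentiable_onD[OF diff]) auto
  moreover have "higher_deriv k (\<lambda>z. \<Sum>j\<in>J. c j * y j z) z =
      (\<Sum>j\<in>J. c j * higher_deriv k (y j) z)" if "z \<in> I" for z
    using higher_deriv_lincomb[of I J N y, OF \<open>open I\<close> diff] \<open>k < N\<close> that by simp
  moreover have "higher_deriv (Suc k) (\<lambda>z. \<Sum>j\<in>J. c j * y j z) x =
      (\<Sum>j\<in>J. c j * higher_deriv (Suc k) (y j) x)"
    using higher_deriv_lincomb[of I J N y, OF \<open>open I\<close> diff] \<open>k < N\<close> \<open>x \<in> I\<close> by simp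
  ultimately show "(higher_deriv k (\<lambda>z. \<Sum>j\<in>J. c j * y j z) has_real_derivative
      higher_deriv (Suc k) (\<lambda>z. \<Sum>j\<in>J. c j * y j z) x) (at x)"
    using DERIV_transform_open(1)[OF _ \<open>open I\<close> \<open>x \<in> I\<close>] by simp
qed

lemma is_linear_ode_solution_lincomb:
  assumes "open I" and sol: "\<And>j. j \<in> J \<Longrightarrow> is_linear_ode_solution n a I (y j)"
  shows "is_linear_ode_solution n a I (\<lambda>z. \<Sum>j\<in>J. c j * y j z)"
proof -
  have diff: "\<And>j. j \<in> J \<Longrightarrow> n_times_differentiable_on n (y j) I"
    using sol by (simp add: is_linear_ode_solution_def)
  have "higher_deriv n (\<lambda>z. \<Sum>j\<in>J. c j * y j z) x +
      (\<Sum>i<n. a i x * higher_deriv i (\<lambda>z. \<Sum>j\<in>J. c j * y j z) x) = 0" if "x \<in> I" for x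
  proof -
    have "higher_deriv n (\<lambda>z. \<Sum>j\<in>J. c j * y j z) x +
        (\<Sum>i<n. a i x * higher_deriv i (\<lambda>z. \<Sum>j\<in>J. c j * y j z) x) =
        (\<Sum>j\<in>J. c j * (higher_deriv n (y j) x + (\<Sum>i<n. a i x * higher_deriv i (y j) x)))"
      using that by (simp add: higher_deriv_lincomb[of I J n y, OF \<open>open I\<close> diff] sum_distrib_left
          distrib_left sum.distrib sum.swap[of _ "{..<n}"] mult_ac)
    also have "\<dots> = 0"
      using sol that by (simp add: is_linear_ode_solution_def)
    finally show ?thesis .
  qed
  then show ?thesis
    using n_times_differentiable_on_lincomb[of I J n y, OF \<open>open I\<close> diff]
    by (simp add: is_linear_ode_solution_def)
qed

lemma not_lin_indep_on_imp_monic_relation: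
  assumes "\<not> lin_indep_on n f I"
  shows "\<exists>m<n. \<exists>e. \<forall>x\<in>I. f m x = (\<Sum>i<m. e i * f i x)"
proof -
  obtain c where rel: "\<And>x. x \<in> I \<Longrightarrow> (\<Sum>i<n. c i * f i x) = 0" and "\<exists>i<n. c i \<noteq> 0"
    using assms by (auto simp: lin_indep_on_def)
  define m where "m = Max {i. i < n \<and> c i \<noteq> 0}"
  have "m < n" "c m \<noteq> 0"
    using Max_in[of "{i. i < n \<and> c i \<noteq> 0}"] \<open>\<exists>i<n. c i \<noteq> 0\<close> by (auto simp: m_def)
  have high_zero: "c i = 0" if "m < i" "i < n" for i
  proof (rule ccontr)
    assume "c i \<noteq> 0"
    then have "i \<le> m"
      unfolding m_def using \<open>i < n\<close> by (intro Max_ge) auto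
    then show False
      using \<open>m < i\<close> by simp
  qed
  have "f m x = (\<Sum>i<m. (- c i / c m) * f i x)" if "x \<in> I" for x
  proof -
    have "(\<Sum>i<n. c i * f i x) = (\<Sum>i<Suc m. c i * f i x)"
      by (rule sum.mono_neutral_right) (use \<open>m < n\<close> high_zero in auto)
    then have "c m * f m x = - (\<Sum>i<m. c i * f i x)"
      using rel[OF that] by simp
    then show ?thesis
      using \<open>c m \<noteq> 0\<close> by (simp add: sum_divide_distrib[symmetric] field_simps sum_negf)
  qed
  then show ?thesis
    using \<open>m < n\<close> by (intro exI[of _ m] conjI exI[of _ "\<lambda>i. - c i / c m"]) auto
qed

lemma monic_relation_imp_infinitely_differentiable:
  assumes "open I" "n_times_differentiable_on m y I"
    and rel: "\<And>x. x \<in> I \<Longrightarrow> higher_deriv m y x = (\<Sum>i<m. e i * higher_deriv i y x)"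
  shows "infinitely_differentiable_on y I"
    and "\<And>j x. x \<in> I \<Longrightarrow> higher_deriv (m + j) y x = (\<Sum>i<m. e i * higher_deriv (i + j) y x)"
proof -
  have *: "n_times_differentiable_on (m + j) y I \<and>
      (\<forall>x\<in>I. higher_deriv (m + j) y x = (\<Sum>i<m. e i * higher_deriv (i + j) y x))" for j
  proof (induction j)
    case 0
    then show ?case
      using assms by simp
  next
    case (Suc j)
    then have diff: "n_times_differentiable_on (m + j) y I"
      and rel_j: "\<And>z. z \<in> I \<Longrightarrow> higher_deriv (m + j) y z = (\<Sum>i<m. e i * higher_deriv (i + j) y z)"
      by auto
    have "((\<lambda>z. \<Sum>i<m. e i * higher_deriv (i + j) y z) has_real_derivative
        (\<Sum>i<m. e i * higher_deriv (Suc (i + j)) y x)) (at x)" if "x \<in> I" for x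
      using that by (intro DERIV_sum DERIV_cmult n_times_differentiable_onD[OF diff]) auto
    note step = DERIV_transform_open[OF this \<open>open I\<close> _ rel_j]
    have "n_times_differentiable_on (m + Suc j) y I"
      using diff step(1) step(2)[symmetric]
      by (auto simp: n_times_differentiable_on_def less_Suc_eq higher_deriv_Suc)
    moreover have "higher_deriv (m + Suc j) y x = (\<Sum>i<m. e i * higher_deriv (i + Suc j) y x)"
      if "x \<in> I" for x
      using step(2)[OF that that] by (simp add: higher_deriv_Suc)
    ultimately show ?case
      by blast
  qed
  show "infinitely_differentiable_on y I"
    unfolding infinitely_differentiable_on_def
    using * n_times_differentiable_on_mono[of "m + _" y I] by (metis le_add2)
  show "\<And>j x. x \<in> I \<Longrightarrow> higher_deriv (m + j) y x = (\<Sum>i<m. e i * higher_deriv (i + j) y x)"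
    using * by blast
qed

lemma dependent_derivatives_imp_annihilated_jet:
  assumes "open I" "x0 \<in> I" "n_times_differentiable_on n y I"
    and "\<not> lin_indep_on n (\<lambda>i. higher_deriv i y) I"
  shows "infinitely_differentiable_on y I"
    and "\<exists>q. q \<noteq> 0 \<and> degree q < n \<and> annihilates q (\<lambda>k. higher_deriv k y x0)"
proof -
  obtain m e where "m < n"
    and rel: "\<And>x. x \<in> I \<Longrightarrow> higher_deriv m y x = (\<Sum>i<m. e i * higher_deriv i y x)"
    using not_lin_indep_on_imp_monic_relation[OF assms(4)] by blast
  have diff: "n_times_differentiable_on m y I"
    using n_times_differentiable_on_mono[OF assms(3)] \<open>m < n\<close> by simp
  show "infinitely_differentiable_on y I"
    by (rule monic_relation_imp_infinitely_differentiable(1)[OF \<open>open I\<close> diff rel])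
  define q where "q = monom 1 m - (\<Sum>i<m. monom (e i) i)"
  have coeff_q: "coeff q i = (if i = m then 1 else if i < m then - e i else 0)" for i
    by (auto simp: q_def coeff_sum coeff_monom if_distrib[of "\<lambda>x. x = _"] sum.delta cong: if_cong)
  have "q \<noteq> 0"
    using coeff_q[of m] by auto
  have "degree q \<le> m"
    by (rule degree_le) (simp add: coeff_q)
  have "poly_shift q (\<lambda>k. higher_deriv k y x0) k = 0" for k
  proof -
    have "poly_shift q (\<lambda>k. higher_deriv k y x0) k = (\<Sum>i<Suc m. coeff q i * higher_deriv (k + i) y x0)"
      using \<open>degree q \<le> m\<close> by (intro poly_shift_eq_sum_lessThan) simp
    also have "\<dots> = higher_deriv (m + k) y x0 - (\<Sum>i<m. e i * higher_deriv (i + k) y x0)"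
      by (simp add: coeff_q sum_negf add.commute)
    also have "\<dots> = 0"
      using monic_relation_imp_infinitely_differentiable(2)[OF \<open>open I\<close> diff rel \<open>x0 \<in> I\<close>] by simp
    finally show ?thesis .
  qed
  then show "\<exists>q. q \<noteq> 0 \<and> degree q < n \<and> annihilates q (\<lambda>k. higher_deriv k y x0)"
    using \<open>q \<noteq> 0\<close> \<open>degree q \<le> m\<close> \<open>m < n\<close> by (intro exI[of _ q]) (simp add: annihilates_def)
qed

section \<open>Existence of solutions with prescribed initial values\<close>

lemma open_interval_obtain_Icc:
  fixes I :: "real set"
  assumes "open I" "is_interval I" "x \<in> I" "x0 \<in> I"
  obtains c d where "c < x" "c < x0" "x < d" "x0 < d" "{c..d} \<subseteq> I"
proof -
  obtain e where "e > 0" "ball x e \<subseteq> I"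
    using assms(1,3) open_contains_ball by blast
  obtain e' where "e' > 0" "ball x0 e' \<subseteq> I"
    using assms(1,4) open_contains_ball by blast
  define r where "r = min e e'"
  have "r > 0" "ball x r \<subseteq> I" "ball x0 r \<subseteq> I"
    using \<open>e > 0\<close> \<open>e' > 0\<close> \<open>ball x e \<subseteq> I\<close> \<open>ball x0 e' \<subseteq> I\<close>
      subset_ball[of r e x] subset_ball[of r e' x0] by (auto simp: r_def)
  define c where "c = min x x0 - r / 2"
  define d where "d = max x x0 + r / 2"
  have "c \<in> ball x r \<union> ball x0 r" "d \<in> ball x r \<union> ball x0 r"
    using \<open>r > 0\<close> by (auto simp: c_def d_def dist_real_def min_def max_def)
  then have "c \<in> I" "d \<in> I"
    using \<open>ball x r \<subseteq> I\<close> \<open>ball x0 r \<subseteq> I\<close> by auto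
  then have "{c..d} \<subseteq> I"
    using interval_subset_is_interval[OF assms(2), of c d] by simp
  moreover have "c < x" "c < x0" "x < d" "x0 < d"
    using \<open>r > 0\<close> by (auto simp: c_def d_def)
  ultimately show ?thesis
    using that by blast
qed

lemma continuous_on_interval_has_antiderivative:
  fixes f :: "real \<Rightarrow> real"
  assumes "open I" "is_interval I" "x0 \<in> I" "continuous_on I f"
  shows "\<exists>G. G x0 = 0 \<and> (\<forall>x\<in>I. (G has_real_derivative f x) (at x))"
proof -
  define G where "G x = integral {x0..x} f - integral {x..x0} f" for x
  have "(G has_real_derivative f x) (at x)" if "x \<in> I" for x
  proof -
    obtain c d where cd: "c < x" "c < x0" "x < d" "x0 < d" "{c..d} \<subseteq> I"
      using open_interval_obtain_Icc[OF assms(1,2) \<open>x \<in> I\<close> assms(3)] by blast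
    have f_cont: "continuous_on {c..d} f"
      using assms(4) cd(5) continuous_on_subset by blast
    have f_int: "f integrable_on {c..z}" if "z \<le> d" for z
      using continuous_on_subset[OF f_cont] that by (intro integrable_continuous_interval) auto
    have G_eq: "G z = integral {c..z} f - integral {c..x0} f" if "z \<in> {c<..<d}" for z
    proof (cases "x0 \<le> z")
      case True
      then have "integral {c..x0} f + integral {x0..z} f = integral {c..z} f"
        using that cd f_int by (intro Henstock_Kurzweil_Integration.integral_combine) auto
      moreover have "integral {z..x0} f = 0"
        using True by (cases "z = x0") auto
      ultimately show ?thesis
        by (simp add: G_def)
    next
      case False
      then have "integral {c..z} f + integral {z..x0} f = integral {c..x0} f"
        using that cd f_int by (intro Henstock_Kurzweil_Integration.integral_combine) auto
      then show ?thesis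
        using False by (simp add: G_def)
    qed
    have "((\<lambda>z. integral {c..z} f) has_real_derivative f x) (at x within {c..d})"
      using cd by (intro integral_has_real_derivative f_cont) auto
    moreover have "at x within {c..d} = at x"
      using cd by (intro at_within_interior) auto
    ultimately have "((\<lambda>z. integral {c..z} f - integral {c..x0} f) has_real_derivative f x) (at x)"
      using DERIV_diff[OF _ DERIV_const] by fastforce
    then show ?thesis
      by (rule has_field_derivative_transform_within_open[of _ _ _ "{c<..<d}"]) (use cd G_eq in auto)
  qed
  moreover have "G x0 = 0"
    by (simp add: G_def)
  ultimately show ?thesis
    by blast
qed

lemma abs_bound_integrate_power_right:
  fixes g g' :: "real \<Rightarrow> real"
  assumes "g x0 = 0" "C \<ge> 0" "x0 \<le> x"
    and D: "\<And>s. x0 \<le> s \<Longrightarrow> s \<le> x \<Longrightarrow> (g has_real_derivative g' s) (at s)"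
    and B: "\<And>s. x0 \<le> s \<Longrightarrow> s \<le> x \<Longrightarrow> \<bar>g' s\<bar> \<le> C * (s - x0) ^ k"
  shows "\<bar>g x\<bar> \<le> C * (x - x0) ^ Suc k / Suc k"
proof -
  define \<phi> where "\<phi> s = C * (s - x0) ^ Suc k / Suc k" for s
  have Dphi: "(\<phi> has_real_derivative C * (s - x0) ^ k) (at s)" for s
    unfolding \<phi>_def by (auto intro!: derivative_eq_intros simp del: power_Suc)
  have cg: "continuous_on {x0..x} g"
    by (rule continuous_at_imp_continuous_on) (metis DERIV_isCont D atLeastAtMost_iff)
  have cphi: "continuous_on {x0..x} \<phi>"
    by (rule continuous_at_imp_continuous_on) (metis DERIV_isCont Dphi)
  have "(\<phi> x0 - g x0) \<le> (\<phi> x - g x)"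
  proof (rule DERIV_nonneg_imp_increasing_open[OF assms(3)])
    fix s assume s: "x0 < s" "s < x"
    show "\<exists>y. ((\<lambda>s. \<phi> s - g s) has_real_derivative y) (at s) \<and> 0 \<le> y"
      using DERIV_diff[OF Dphi D] B[of s] s by (intro exI[of _ "C * (s - x0) ^ k - g' s"] conjI) (auto simp: abs_le_iff)
  qed (intro continuous_on_diff cphi cg)
  moreover have "(\<phi> x0 + g x0) \<le> (\<phi> x + g x)"
  proof (rule DERIV_nonneg_imp_increasing_open[OF assms(3)])
    fix s assume s: "x0 < s" "s < x"
    show "\<exists>y. ((\<lambda>s. \<phi> s + g s) has_real_derivative y) (at s) \<and> 0 \<le> y"
      using DERIV_add[OF Dphi D] B[of s] s by (intro exI[of _ "C * (s - x0) ^ k + g' s"] conjI) (auto simp: abs_le_iff)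
  qed (intro continuous_on_add cphi cg)
  moreover have "\<phi> x0 = 0" by (simp add: \<phi>_def)
  ultimately show ?thesis using assms(1) by (simp add: \<phi>_def abs_le_iff)
qed

lemma abs_bound_integrate_power_left:
  fixes g g' :: "real \<Rightarrow> real"
  assumes "g x0 = 0" "C \<ge> 0" "x \<le> x0"
    and D: "\<And>s. x \<le> s \<Longrightarrow> s \<le> x0 \<Longrightarrow> (g has_real_derivative g' s) (at s)"
    and B: "\<And>s. x \<le> s \<Longrightarrow> s \<le> x0 \<Longrightarrow> \<bar>g' s\<bar> \<le> C * (x0 - s) ^ k"
  shows "\<bar>g x\<bar> \<le> C * (x0 - x) ^ Suc k / Suc k"
proof -
  define \<phi> where "\<phi> s = C * (x0 - s) ^ Suc k / Suc k" for s
  have Dphi: "(\<phi> has_real_derivative - (C * (x0 - s) ^ k)) (at s)" for s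
    unfolding \<phi>_def by (auto intro!: derivative_eq_intros simp del: power_Suc)
  have cg: "continuous_on {x..x0} g"
    by (rule continuous_at_imp_continuous_on) (metis DERIV_isCont D atLeastAtMost_iff)
  have cphi: "continuous_on {x..x0} \<phi>"
    by (rule continuous_at_imp_continuous_on) (metis DERIV_isCont Dphi)
  have "(\<phi> x - g x) \<ge> (\<phi> x0 - g x0)"
  proof (rule DERIV_nonpos_imp_decreasing_open[OF assms(3)])
    fix s assume s: "x < s" "s < x0"
    show "\<exists>y. ((\<lambda>s. \<phi> s - g s) has_real_derivative y) (at s) \<and> y \<le> 0"
      using DERIV_diff[OF Dphi D] B[of s] s
      by (intro exI[of _ "- (C * (x0 - s) ^ k) - g' s"] conjI) (auto simp: abs_le_iff)
  qed (intro continuous_on_diff cphi cg)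
  moreover have "(\<phi> x + g x) \<ge> (\<phi> x0 + g x0)"
  proof (rule DERIV_nonpos_imp_decreasing_open[OF assms(3)])
    fix s assume s: "x < s" "s < x0"
    show "\<exists>y. ((\<lambda>s. \<phi> s + g s) has_real_derivative y) (at s) \<and> y \<le> 0"
      using DERIV_add[OF Dphi D] B[of s] s
      by (intro exI[of _ "- (C * (x0 - s) ^ k) + g' s"] conjI) (auto simp: abs_le_iff)
  qed (intro continuous_on_add cphi cg)
  moreover have "\<phi> x0 = 0" by (simp add: \<phi>_def)
  ultimately show ?thesis using assms(1) by (simp add: \<phi>_def abs_le_iff)
qed

lemma abs_bound_integrate_power:
  fixes g g' :: "real \<Rightarrow> real"
  assumes "g x0 = 0" "C \<ge> 0"
    and D: "\<And>s. min x0 x \<le> s \<Longrightarrow> s \<le> max x0 x \<Longrightarrow> (g has_real_derivative g' s) (at s)"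
    and B: "\<And>s. min x0 x \<le> s \<Longrightarrow> s \<le> max x0 x \<Longrightarrow> \<bar>g' s\<bar> \<le> C * \<bar>s - x0\<bar> ^ k"
  shows "\<bar>g x\<bar> \<le> C * \<bar>x - x0\<bar> ^ Suc k / Suc k"
proof (cases "x0 \<le> x")
  case True
  have "\<bar>g x\<bar> \<le> C * (x - x0) ^ Suc k / Suc k"
  proof (rule abs_bound_integrate_power_right)
    show "g x0 = 0" "C \<ge> 0" "x0 \<le> x" using assms True by auto
    fix s assume s: "x0 \<le> s" "s \<le> x"
    show "(g has_real_derivative g' s) (at s)" using D s True by simp
    show "\<bar>g' s\<bar> \<le> C * (s - x0) ^ k" using B[of s] s True by simp
  qed
  then show ?thesis using True by simp
next
  case False
  have "\<bar>g x\<bar> \<le> C * (x0 - x) ^ Suc k / Suc k"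
  proof (rule abs_bound_integrate_power_left)
    show "g x0 = 0" "C \<ge> 0" using assms by auto
    show "x \<le> x0" using False by simp
    fix s assume s: "x \<le> s" "s \<le> x0"
    show "(g has_real_derivative g' s) (at s)" using D s False by simp
    have "\<bar>s - x0\<bar> = x0 - s" using s by simp
    then show "\<bar>g' s\<bar> \<le> C * (x0 - s) ^ k" using B[of s] s False by simp
  qed
  moreover have "\<bar>x - x0\<bar> = x0 - x" using False by simp
  ultimately show ?thesis by simp
qed

lemma has_field_derivative_sequence:
  fixes f :: "nat \<Rightarrow> 'a::{real_normed_field,banach} \<Rightarrow> 'a"
  assumes "convex S"
    and "\<And>n x. x \<in> S \<Longrightarrow> (f n has_field_derivative f' n x) (at x within S)"
    and "uniform_limit S f' g' sequentially"
    and "x0 \<in> S" "(\<lambda>n. f n x0) \<longlonglongrightarrow> l"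
  shows "\<exists>g. \<forall>x\<in>S. (\<lambda>n. f n x) \<longlonglongrightarrow> g x \<and> (g has_field_derivative g' x) (at x within S)"
  unfolding has_field_derivative_def
proof (rule has_derivative_sequence[of S f "\<lambda>n x h. f' n x * h" "\<lambda>x h. g' x * h" x0 l])
  show "\<forall>\<^sub>F n in sequentially. \<forall>x\<in>S. \<forall>h. norm (f' n x * h - g' x * h) \<le> e * norm h"
    if "e > 0" for e
  proof -
    have "\<forall>\<^sub>F n in sequentially. \<forall>x\<in>S. norm (f' n x - g' x) < e"
      using uniform_limitD[OF assms(3) \<open>e > 0\<close>] by (simp add: dist_norm)
    then show ?thesis
      by eventually_elim
        (auto simp: left_diff_distrib[symmetric] norm_mult intro!: mult_right_mono[OF less_imp_le])
  qed
qed (use assms(1,2,4,5) in \<open>simp_all add: has_field_derivative_def\<close>)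

locale linear_ode_ivp =
  fixes n :: nat and a :: "nat \<Rightarrow> real \<Rightarrow> real" and I :: "real set" and x0 :: real
  assumes n_pos: "n \<ge> 1" and open_I: "open I" and interval_I: "is_interval I"
    and x0_in_I: "x0 \<in> I" and continuous_coeffs: "\<And>i. i < n \<Longrightarrow> continuous_on I (a i)"
begin

text \<open>The equation is treated as the first-order system \<open>Y\<^sub>i' = Y\<^sub>i\<^sub>+\<^sub>1\<close> for \<open>i < n - 1\<close>,
  \<open>Y\<^sub>n\<^sub>-\<^sub>1' = - (\<Sum>j<n. a\<^sub>j Y\<^sub>j)\<close>, where \<open>Y\<^sub>i\<close> stands for \<open>y\<^sup>(\<^sup>i\<^sup>)\<close>;
  it is solved by Picard iteration starting from the constant initial data.\<close>

definition ode_rhs :: "(nat \<Rightarrow> real \<Rightarrow> real) \<Rightarrow> nat \<Rightarrow> real \<Rightarrow> real" where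
  "ode_rhs Y i x = (if Suc i < n then Y (Suc i) x else - (\<Sum>j<n. a j x * Y j x))"

definition antideriv :: "(real \<Rightarrow> real) \<Rightarrow> real \<Rightarrow> real" where
  "antideriv f = (SOME G. G x0 = 0 \<and> (\<forall>x\<in>I. (G has_real_derivative f x) (at x)))"

lemma
  assumes "continuous_on I f"
  shows antideriv_x0: "antideriv f x0 = 0"
    and antideriv_has_derivative: "x \<in> I \<Longrightarrow> (antideriv f has_real_derivative f x) (at x)"
proof -
  have "\<exists>G. G x0 = 0 \<and> (\<forall>x\<in>I. (G has_real_derivative f x) (at x))"
    by (rule continuous_on_interval_has_antiderivative[OF open_I interval_I x0_in_I assms])
  then have "antideriv f x0 = 0 \<and> (\<forall>x\<in>I. (antideriv f has_real_derivative f x) (at x))"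
    unfolding antideriv_def by (rule someI_ex)
  then show "antideriv f x0 = 0" "x \<in> I \<Longrightarrow> (antideriv f has_real_derivative f x) (at x)"
    by auto
qed

primrec picard :: "(nat \<Rightarrow> real) \<Rightarrow> nat \<Rightarrow> nat \<Rightarrow> real \<Rightarrow> real" where
  "picard v 0 = (\<lambda>i x. v i)"
| "picard v (Suc k) = (\<lambda>i x. v i + antideriv (ode_rhs (picard v k) i) x)"

definition picard_limit :: "(nat \<Rightarrow> real) \<Rightarrow> nat \<Rightarrow> real \<Rightarrow> real" where
  "picard_limit v i x = v i + (\<Sum>j. picard v (Suc j) i x - picard v j i x)"

lemma ode_rhs_continuous:
  assumes "\<And>j. j < n \<Longrightarrow> continuous_on I (Y j)" "i < n"
  shows "continuous_on I (ode_rhs Y i)"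
  unfolding ode_rhs_def using assms continuous_coeffs
  by (cases "Suc i < n") (auto intro!: continuous_intros)

lemma picard_continuous: "i < n \<Longrightarrow> continuous_on I (picard v k i)"
proof (induction k arbitrary: i)
  case (Suc k)
  then have "continuous_on I (ode_rhs (picard v k) i)"
    by (intro ode_rhs_continuous)
  then have "continuous_on I (antideriv (ode_rhs (picard v k) i))"
    using antideriv_has_derivative by (blast intro: has_real_derivative_imp_continuous_on)
  then show ?case
    by (simp add: continuous_intros)
qed simp

lemma ode_rhs_picard_continuous: "i < n \<Longrightarrow> continuous_on I (ode_rhs (picard v k) i)"
  by (intro ode_rhs_continuous picard_continuous)

lemma picard_has_derivative:
  assumes "i < n" "x \<in> I"
  shows "(picard v (Suc k) i has_real_derivative ode_rhs (picard v k) i x) (at x)"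
  using antideriv_has_derivative[OF ode_rhs_picard_continuous[OF assms(1)] assms(2)]
  by (auto intro!: derivative_eq_intros)

lemma picard_x0: "i < n \<Longrightarrow> picard v k i x0 = v i"
  by (cases k) (simp_all add: antideriv_x0 ode_rhs_picard_continuous)

lemma picard_limit_x0: "i < n \<Longrightarrow> picard_limit v i x0 = v i"
  by (simp add: picard_limit_def picard_x0 del: picard.simps)

lemma ode_rhs_diff: "ode_rhs Y i x - ode_rhs Z i x = ode_rhs (\<lambda>j z. Y j z - Z j z) i x"
  unfolding ode_rhs_def by (simp add: sum_subtractf algebra_simps)

lemma sum_abs_ode_rhs_le:
  assumes "A \<ge> 0" "\<And>j. j < n \<Longrightarrow> \<bar>a j x\<bar> \<le> A"
  shows "(\<Sum>i<n. \<bar>ode_rhs Y i x\<bar>) \<le> (1 + A) * (\<Sum>j<n. \<bar>Y j x\<bar>)"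
proof -
  obtain m where m: "n = Suc m"
    using n_pos by (cases n) auto
  have "(\<Sum>i<m. \<bar>ode_rhs Y i x\<bar>) = (\<Sum>i<m. \<bar>Y (Suc i) x\<bar>)"
    unfolding ode_rhs_def by (rule sum.cong) (auto simp: m)
  also have "\<dots> \<le> (\<Sum>j<n. \<bar>Y j x\<bar>)"
    unfolding m sum.lessThan_Suc_shift by simp
  finally have low: "(\<Sum>i<m. \<bar>ode_rhs Y i x\<bar>) \<le> (\<Sum>j<n. \<bar>Y j x\<bar>)" .
  have "\<bar>ode_rhs Y m x\<bar> = \<bar>\<Sum>j<n. a j x * Y j x\<bar>"
    unfolding ode_rhs_def using m by simp
  also have "\<dots> \<le> (\<Sum>j<n. A * \<bar>Y j x\<bar>)"
    using assms(2) by (intro order.trans[OF sum_abs] sum_mono)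
      (auto simp: abs_mult intro: mult_right_mono)
  finally have top: "\<bar>ode_rhs Y m x\<bar> \<le> A * (\<Sum>j<n. \<bar>Y j x\<bar>)"
    by (simp add: sum_distrib_left)
  show ?thesis
    using low top by (simp add: m algebra_simps)
qed

lemma coeffs_bounded:
  assumes "{c..d} \<subseteq> I"
  obtains A where "A \<ge> 0" "\<And>j x. j < n \<Longrightarrow> x \<in> {c..d} \<Longrightarrow> \<bar>a j x\<bar> \<le> A"
proof -
  have "\<exists>B\<ge>0. \<forall>x\<in>{c..d}. \<bar>a j x\<bar> \<le> B" if "j < n" for j
    using continuous_on_compact_bound[OF compact_Icc continuous_on_subset[OF continuous_coeffs[OF that] assms]]
    by (metis real_norm_def)
  then obtain B where B: "\<And>j. j < n \<Longrightarrow> B j \<ge> 0 \<and> (\<forall>x\<in>{c..d}. \<bar>a j x\<bar> \<le> B j)"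
    by metis
  have "\<bar>a j x\<bar> \<le> (\<Sum>j<n. B j)" if "j < n" "x \<in> {c..d}" for j x
    using B that by (intro order.trans[OF _ member_le_sum[of j]]) auto
  moreover have "(\<Sum>j<n. B j) \<ge> 0"
    using B by (intro sum_nonneg) auto
  ultimately show ?thesis
    using that by blast
qed

lemma picard_step_bound:
  assumes cd: "c \<le> x0" "x0 \<le> d" "{c..d} \<subseteq> I"
    and A: "A \<ge> 0" "\<And>j x. j < n \<Longrightarrow> x \<in> {c..d} \<Longrightarrow> \<bar>a j x\<bar> \<le> A"
    and B: "\<And>x. x \<in> {c..d} \<Longrightarrow> (\<Sum>i<n. \<bar>picard v 1 i x - picard v 0 i x\<bar>) \<le> B"
    and "x \<in> {c..d}"
  shows "(\<Sum>i<n. \<bar>picard v (Suc k) i x - picard v k i x\<bar>) \<le> B * (1 + A) ^ k * \<bar>x - x0\<bar> ^ k / fact k"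
  using \<open>x \<in> {c..d}\<close>
proof (induction k arbitrary: x)
  case 0
  then show ?case
    using B by simp
next
  case (Suc k)
  define M where "M = 1 + A"
  have "M \<ge> 0"
    using A by (simp add: M_def)
  have "0 \<le> (\<Sum>i<n. \<bar>picard v 1 i x0 - picard v 0 i x0\<bar>)"
    by (rule sum_nonneg) simp
  also have "\<dots> \<le> B"
    using B cd by auto
  finally have "B \<ge> 0" .
  define \<Delta> where "\<Delta> k' i z = picard v (Suc k') i z - picard v k' i z" for k' i z
  \<comment> \<open>The signs make \<open>g\<close> equal to the left-hand side at \<open>x\<close> while its derivative stays
    controlled by the induction hypothesis.\<close>
  define \<sigma> where "\<sigma> i = sgn (\<Delta> (Suc k) i x)" for i
  define g where "g s = (\<Sum>i<n. \<sigma> i * \<Delta> (Suc k) i s)" for s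
  define g' where "g' s = (\<Sum>i<n. \<sigma> i * ode_rhs (\<Delta> k) i s)" for s
  define C where "C = B * M ^ Suc k / fact k"
  have "C \<ge> 0"
    using \<open>B \<ge> 0\<close> \<open>M \<ge> 0\<close> by (simp add: C_def)
  have "g x0 = 0"
    unfolding g_def \<Delta>_def by (intro sum.neutral) (simp add: picard_x0 del: picard.simps)
  have in_cd: "s \<in> {c..d}" if "min x0 x \<le> s" "s \<le> max x0 x" for s
    using that Suc.prems cd by auto
  have "(g has_real_derivative g' s) (at s)" if "min x0 x \<le> s" "s \<le> max x0 x" for s
  proof -
    have "s \<in> I"
      using in_cd[OF that] cd by auto
    then have "(g has_real_derivative
        (\<Sum>i<n. \<sigma> i * (ode_rhs (picard v (Suc k)) i s - ode_rhs (picard v k) i s))) (at s)"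
      unfolding g_def \<Delta>_def by (intro DERIV_sum DERIV_cmult DERIV_diff picard_has_derivative) auto
    then show ?thesis
      unfolding g'_def \<Delta>_def ode_rhs_diff by simp
  qed
  moreover have "\<bar>g' s\<bar> \<le> C * \<bar>s - x0\<bar> ^ k" if "min x0 x \<le> s" "s \<le> max x0 x" for s
  proof -
    have "\<bar>g' s\<bar> \<le> (\<Sum>i<n. \<bar>ode_rhs (\<Delta> k) i s\<bar>)"
      unfolding g'_def
      by (intro order.trans[OF sum_abs] sum_mono)
        (auto simp: \<sigma>_def abs_mult abs_sgn_eq intro: mult_left_le_one_le)
    also have "\<dots> \<le> M * (\<Sum>j<n. \<bar>\<Delta> k j s\<bar>)"
      unfolding M_def using A in_cd[OF that] by (intro sum_abs_ode_rhs_le) auto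
    also have "\<dots> \<le> M * (B * M ^ k * \<bar>s - x0\<bar> ^ k / fact k)"
      using Suc.IH[OF in_cd[OF that]] \<open>M \<ge> 0\<close> unfolding \<Delta>_def M_def by (intro mult_left_mono) auto
    also have "\<dots> = C * \<bar>s - x0\<bar> ^ k"
      by (simp add: C_def algebra_simps)
    finally show ?thesis .
  qed
  ultimately have "\<bar>g x\<bar> \<le> C * \<bar>x - x0\<bar> ^ Suc k / Suc k"
    using abs_bound_integrate_power[of g x0 C x g' k] \<open>g x0 = 0\<close> \<open>C \<ge> 0\<close> by blast
  moreover have "g x = (\<Sum>i<n. \<bar>\<Delta> (Suc k) i x\<bar>)"
    unfolding g_def \<sigma>_def by (simp add: abs_sgn mult.commute)
  moreover have "C * \<bar>x - x0\<bar> ^ Suc k / Suc k = B * M ^ Suc k * \<bar>x - x0\<bar> ^ Suc k / fact (Suc k)"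
    by (simp add: C_def fact_Suc field_simps)
  ultimately show ?case
    unfolding \<Delta>_def M_def by simp
qed

lemma picard_uniform_limit:
  assumes cd: "c \<le> x0" "x0 \<le> d" "{c..d} \<subseteq> I" and "i < n"
  shows "uniform_limit {c..d} (\<lambda>k. picard v k i) (picard_limit v i) sequentially"
proof -
  obtain A where A: "A \<ge> 0" "\<And>j x. j < n \<Longrightarrow> x \<in> {c..d} \<Longrightarrow> \<bar>a j x\<bar> \<le> A"
    using coeffs_bounded[OF cd(3)] by blast
  have "continuous_on {c..d} (\<lambda>x. \<Sum>i<n. \<bar>picard v 1 i x - picard v 0 i x\<bar>)"
    using continuous_on_subset[OF picard_continuous cd(3)]
    by (intro continuous_intros) (auto simp del: picard.simps)
  then obtain B where "\<And>x. x \<in> {c..d} \<Longrightarrow> norm (\<Sum>i<n. \<bar>picard v 1 i x - picard v 0 i x\<bar>) \<le> B"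
    using continuous_on_compact_bound[OF compact_Icc] by blast
  then have B: "\<And>x. x \<in> {c..d} \<Longrightarrow> (\<Sum>i<n. \<bar>picard v 1 i x - picard v 0 i x\<bar>) \<le> B"
    by simp
  have "B \<ge> 0"
    using cd by (intro order.trans[OF sum_nonneg B[of x0]]) auto
  define M where "M = (1 + A) * (d - c)"
  define \<Delta> where "\<Delta> j x = picard v (Suc j) i x - picard v j i x" for j x
  have "norm (\<Delta> j x) \<le> B * M ^ j / fact j" if x: "x \<in> {c..d}" for j x
  proof -
    have "norm (\<Delta> j x) \<le> (\<Sum>i<n. \<bar>picard v (Suc j) i x - picard v j i x\<bar>)"
      unfolding \<Delta>_def real_norm_def using \<open>i < n\<close>
      by (intro member_le_sum[where f = "\<lambda>i. \<bar>picard v (Suc j) i x - picard v j i x\<bar>"]) auto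
    also have "\<dots> \<le> B * (1 + A) ^ j * \<bar>x - x0\<bar> ^ j / fact j"
      by (rule picard_step_bound[OF cd A B x])
    also have "\<dots> \<le> B * (1 + A) ^ j * (d - c) ^ j / fact j"
      using x cd A \<open>B \<ge> 0\<close> by (intro divide_right_mono mult_left_mono power_mono) auto
    finally show ?thesis
      by (simp add: M_def power_mult_distrib mult.assoc)
  qed
  moreover have "summable (\<lambda>j. B * M ^ j / fact j)"
    using summable_mult[OF summable_exp[of M], of B] by (simp add: divide_inverse mult_ac)
  ultimately have "uniform_limit {c..d} (\<lambda>k x. \<Sum>j<k. \<Delta> j x) (\<lambda>x. \<Sum>j. \<Delta> j x) sequentially"
    by (intro Weierstrass_m_test) auto
  then have "uniform_limit {c..d} (\<lambda>k x. v i + (\<Sum>j<k. \<Delta> j x)) (\<lambda>x. v i + (\<Sum>j. \<Delta> j x)) sequentially"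
    by (intro uniform_limit_intros) auto
  moreover have "v i + (\<Sum>j<k. \<Delta> j x) = picard v k i x" for k x
    unfolding \<Delta>_def sum_lessThan_telescope[of "\<lambda>j. picard v j i x"] by simp
  then have "(\<lambda>k x. v i + (\<Sum>j<k. \<Delta> j x)) = (\<lambda>k. picard v k i)"
    by (simp add: fun_eq_iff)
  moreover have "(\<lambda>x. v i + (\<Sum>j. \<Delta> j x)) = picard_limit v i"
    by (simp add: fun_eq_iff picard_limit_def \<Delta>_def)
  ultimately show ?thesis
    by simp
qed

lemma ode_rhs_picard_uniform_limit:
  assumes cd: "c \<le> x0" "x0 \<le> d" "{c..d} \<subseteq> I" and "i < n"
  shows "uniform_limit {c..d} (\<lambda>k. ode_rhs (picard v k) i) (ode_rhs (picard_limit v) i) sequentially"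
  unfolding uniform_limit_iff
proof (intro allI impI)
  fix e :: real assume "e > 0"
  obtain A where A: "A \<ge> 0" "\<And>j x. j < n \<Longrightarrow> x \<in> {c..d} \<Longrightarrow> \<bar>a j x\<bar> \<le> A"
    using coeffs_bounded[OF cd(3)] by blast
  define K where "K = (1 + A) * n"
  have "K > 0"
    using A n_pos by (simp add: K_def)
  define e' where "e' = e / (2 * K)"
  have "e' > 0"
    using \<open>e > 0\<close> \<open>K > 0\<close> by (simp add: e'_def)
  have "\<forall>j\<in>{..<n}. \<forall>\<^sub>F k in sequentially. \<forall>x\<in>{c..d}. dist (picard v k j x) (picard_limit v j x) < e'"
    using picard_uniform_limit[OF cd] \<open>e' > 0\<close> by (auto simp: uniform_limit_iff)
  then have "\<forall>\<^sub>F k in sequentially. \<forall>j\<in>{..<n}. \<forall>x\<in>{c..d}. dist (picard v k j x) (picard_limit v j x) < e'"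
    by (intro eventually_ball_finite) auto
  then show "\<forall>\<^sub>F k in sequentially. \<forall>x\<in>{c..d}.
      dist (ode_rhs (picard v k) i x) (ode_rhs (picard_limit v) i x) < e"
  proof eventually_elim
    case (elim k)
    show ?case
    proof
      fix x assume "x \<in> {c..d}"
      have "\<bar>ode_rhs (picard v k) i x - ode_rhs (picard_limit v) i x\<bar>
          \<le> (\<Sum>i<n. \<bar>ode_rhs (\<lambda>j z. picard v k j z - picard_limit v j z) i x\<bar>)"
        unfolding ode_rhs_diff using \<open>i < n\<close>
        by (intro member_le_sum[where f = "\<lambda>i. \<bar>ode_rhs _ i x\<bar>"]) auto
      also have "\<dots> \<le> (1 + A) * (\<Sum>j<n. \<bar>picard v k j x - picard_limit v j x\<bar>)"
        using A \<open>x \<in> {c..d}\<close> by (intro sum_abs_ode_rhs_le) auto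
      also have "\<dots> \<le> (1 + A) * (\<Sum>j<n. e')"
        using elim \<open>x \<in> {c..d}\<close> A by (intro mult_left_mono sum_mono less_imp_le) (auto simp: dist_real_def)
      also have "\<dots> = K * e'"
        by (simp add: K_def)
      also have "\<dots> = e / 2"
        using \<open>K > 0\<close> by (simp add: e'_def)
      finally show "dist (ode_rhs (picard v k) i x) (ode_rhs (picard_limit v) i x) < e"
        using \<open>e > 0\<close> by (simp add: dist_real_def)
    qed
  qed
qed

lemma picard_limit_has_derivative:
  assumes "i < n" "x \<in> I"
  shows "(picard_limit v i has_real_derivative ode_rhs (picard_limit v) i x) (at x)"
proof -
  obtain c d where cd: "c < x" "c < x0" "x < d" "x0 < d" "{c..d} \<subseteq> I"
    using open_interval_obtain_Icc[OF open_I interval_I \<open>x \<in> I\<close> x0_in_I] by blast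
  have "\<exists>g. \<forall>z\<in>{c<..<d}. (\<lambda>k. picard v (Suc k) i z) \<longlonglongrightarrow> g z \<and>
      (g has_field_derivative ode_rhs (picard_limit v) i z) (at z within {c<..<d})"
  proof (rule has_field_derivative_sequence[of "{c<..<d}" "\<lambda>k. picard v (Suc k) i"
        "\<lambda>k. ode_rhs (picard v k) i" _ x0 "v i"])
    show "(picard v (Suc k) i has_field_derivative ode_rhs (picard v k) i z) (at z within {c<..<d})"
      if "z \<in> {c<..<d}" for k z
    proof -
      have "z \<in> I"
        using that cd(5) by (auto simp: subset_iff)
      then show ?thesis
        by (rule has_field_derivative_at_within[OF picard_has_derivative[OF \<open>i < n\<close>]])
    qed
    show "uniform_limit {c<..<d} (\<lambda>k. ode_rhs (picard v k) i) (ode_rhs (picard_limit v) i) sequentially"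
      by (rule uniform_limit_on_subset[OF ode_rhs_picard_uniform_limit]) (use cd \<open>i < n\<close> in auto)
    show "(\<lambda>k. picard v (Suc k) i x0) \<longlonglongrightarrow> v i"
      using \<open>i < n\<close> by (simp add: picard_x0 del: picard.simps)
  qed (use cd in simp_all)
  then obtain g where g: "\<forall>z\<in>{c<..<d}. (\<lambda>k. picard v (Suc k) i z) \<longlonglongrightarrow> g z \<and>
      (g has_field_derivative ode_rhs (picard_limit v) i z) (at z within {c<..<d})"
    by blast
  have "g z = picard_limit v i z" if "z \<in> {c<..<d}" for z
  proof -
    have "(\<lambda>k. picard v k i z) \<longlonglongrightarrow> picard_limit v i z"
      using that cd \<open>i < n\<close> by (intro tendsto_uniform_limitI[OF picard_uniform_limit]) auto
    moreover have "(\<lambda>k. picard v (Suc k) i z) \<longlonglongrightarrow> g z"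
      using g that by blast
    ultimately show ?thesis
      using LIMSEQ_unique LIMSEQ_Suc by blast
  qed
  moreover have "x \<in> {c<..<d}"
    using cd by simp
  then have "(g has_field_derivative ode_rhs (picard_limit v) i x) (at x within {c<..<d})"
    using g by blast
  then have "(g has_field_derivative ode_rhs (picard_limit v) i x) (at x)"
    using at_within_open[OF \<open>x \<in> {c<..<d}\<close>] by simp
  ultimately show ?thesis
    using DERIV_transform_open(1)[of g _ x "{c<..<d}" "picard_limit v i"] cd by simp
qed

lemma ivp_solution_exists: "\<exists>y. is_linear_ode_solution n a I y \<and> (\<forall>k<n. higher_deriv k y x0 = v k)"
proof -
  define y where "y = picard_limit v 0"
  have hd: "\<forall>z\<in>I. higher_deriv k y z = picard_limit v k z" if "k < n" for k
    using that
  proof (induction k)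
    case (Suc k)
    have "higher_deriv (Suc k) y z = ode_rhs (picard_limit v) k z" if "z \<in> I" for z
      using DERIV_transform_open(2)[OF picard_limit_has_derivative open_I that] Suc that
      by (simp add: higher_deriv_Suc)
    then show ?case
      using Suc.prems by (simp add: ode_rhs_def)
  qed (simp add: y_def)
  have deriv: "(higher_deriv k y has_real_derivative ode_rhs (picard_limit v) k x) (at x)"
    and hd_Suc: "higher_deriv (Suc k) y x = ode_rhs (picard_limit v) k x"
    if "k < n" "x \<in> I" for k x
    using DERIV_transform_open[OF picard_limit_has_derivative open_I \<open>x \<in> I\<close>] hd that
    by (simp_all add: higher_deriv_Suc)
  obtain m where m: "n = Suc m"
    using n_pos by (cases n) auto
  have "higher_deriv n y x + (\<Sum>i<n. a i x * higher_deriv i y x) = 0" if "x \<in> I" for x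
  proof -
    have "higher_deriv n y x = - (\<Sum>i<n. a i x * picard_limit v i x)"
      using hd_Suc[of m x, unfolded ode_rhs_def] that by (simp add: m)
    moreover have "(\<Sum>i<n. a i x * higher_deriv i y x) = (\<Sum>i<n. a i x * picard_limit v i x)"
      using hd that by simp
    ultimately show ?thesis
      by simp
  qed
  moreover have "n_times_differentiable_on n y I"
    using deriv hd_Suc by (simp add: n_times_differentiable_on_def)
  moreover have "\<forall>k<n. higher_deriv k y x0 = v k"
    using hd x0_in_I picard_limit_x0 by simp
  ultimately show ?thesis
    unfolding is_linear_ode_solution_def by blast
qed

lemma fundamental_solutions_exist:
  "\<exists>Y. \<forall>j. is_linear_ode_solution n a I (Y j) \<and>
      (\<forall>k<n. higher_deriv k (Y j) x0 = (if k = j then 1 else 0))"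
  by (intro choice allI ivp_solution_exists)

end

theorem theorem2p2:
  fixes n :: nat and a :: "nat \<Rightarrow> real \<Rightarrow> real" and I :: "real set"
  assumes "n \<ge> 1"
    and "open I" and "is_interval I" and "I \<noteq> {}"
    and "\<forall>i<n. continuous_on I (a i)"
  shows "\<exists>y. is_linear_ode_solution n a I y \<and>
             lin_indep_on n (\<lambda>i. higher_deriv i y) I"
proof (rule ccontr)
  assume no_indep: "\<nexists>y. is_linear_ode_solution n a I y \<and> lin_indep_on n (\<lambda>i. higher_deriv i y) I"
  obtain x0 where "x0 \<in> I"
    using \<open>I \<noteq> {}\<close> by blast
  interpret linear_ode_ivp n a I x0
    using assms \<open>x0 \<in> I\<close> by unfold_locales auto
  have jet: "infinitely_differentiable_on y I"
    "\<exists>q. q \<noteq> 0 \<and> degree q < n \<and> annihilates q (\<lambda>k. higher_deriv k y x0)"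
    if "is_linear_ode_solution n a I y" for y
    using dependent_derivatives_imp_annihilated_jet[OF \<open>open I\<close> \<open>x0 \<in> I\<close>] that no_indep
    by (auto simp: is_linear_ode_solution_def)
  obtain Y where "\<forall>j. is_linear_ode_solution n a I (Y j) \<and>
      (\<forall>k<n. higher_deriv k (Y j) x0 = (if k = j then 1 else 0))"
    using fundamental_solutions_exist by blast
  then have Y: "\<And>j. is_linear_ode_solution n a I (Y j)"
    and Y_x0: "\<And>j k. k < n \<Longrightarrow> higher_deriv k (Y j) x0 = (if k = j then 1 else 0)"
    by simp_all
  have "\<exists>v. \<forall>q. q \<noteq> 0 \<longrightarrow> degree q < n \<longrightarrow>
      \<not> annihilates q (\<lambda>k. \<Sum>j<n. v j * higher_deriv k (Y j) x0)"
    using jet(2)[OF Y] Y_x0 by (intro ex_lincomb_without_short_annihilator) blast+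
  then obtain v where v: "\<forall>q. q \<noteq> 0 \<longrightarrow> degree q < n \<longrightarrow>
      \<not> annihilates q (\<lambda>k. \<Sum>j<n. v j * higher_deriv k (Y j) x0)"
    by blast
  have "is_linear_ode_solution n a I (\<lambda>z. \<Sum>j<n. v j * Y j z)"
    using \<open>open I\<close> Y by (rule is_linear_ode_solution_lincomb)
  then obtain q where "q \<noteq> 0" "degree q < n"
    and "annihilates q (\<lambda>k. higher_deriv k (\<lambda>z. \<Sum>j<n. v j * Y j z) x0)"
    using jet(2) by blast
  moreover have "higher_deriv k (\<lambda>z. \<Sum>j<n. v j * Y j z) x0 = (\<Sum>j<n. v j * higher_deriv k (Y j) x0)" for k
    using \<open>open I\<close> jet(1)[OF Y] \<open>x0 \<in> I\<close> by (rule higher_deriv_lincomb_smooth)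
  ultimately show False
    using v by simp
qed

end
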